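(* Let $n\ge2$, $d\ge2$ and $\mathbf{m}=(d-1,1,0,\ldots,0)\in\mathbb{N}^n$ (any $\mathbf{m}$ with $|\mathbf{m}|=d$ and $\max(\mathbf{m})=d-1$ is of this form up to permuting coordinates). Then \[\mathcal{A}_{n,d}\setminus\mathcal{A}_{n,d,\mathbf{m}}=\begin{cases}\{(2s+1,2t+1,0,\ldots,0): s,t\in\mathbb{N}\} & \text{if } d=2,\\ \{(ds-1,1,0,\ldots,0): s\ge1\} & \text{if } d>2.\end{cases}\]
   Context: For $\mathbf{a}\in\mathbb{N}^n$, $|\mathbf{a}|=\sum_i a_i$ and $\max(\mathbf{a})=\max_i a_i$. $T_{n,d}=\{\mathbf{a}\in\mathbb{N}^n:|\mathbf{a}|=d\}$; $\mathcal{A}_{n,d}$ is the (additive) semigroup generated by $T_{n,d}$; for $\mathbf{m}\in T_{n,d}$, $\mathcal{A}_{n,d,\mathbf{m}}$ is the semigroup generated by $T_{n,d}\setminus\{\mathbf{m}\}$. *)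

theory Defs
  imports Main
begin

text \<open>Vectors in N^n are represented as functions nat => nat vanishing at indices >= n
  (coordinate i of the paper corresponds to index i-1).\<close>

definition natvecs :: "nat \<Rightarrow> (nat \<Rightarrow> nat) set" where
  "natvecs n = {a. \<forall>i\<ge>n. a i = 0}"

definition vabs :: "nat \<Rightarrow> (nat \<Rightarrow> nat) \<Rightarrow> nat" where
  "vabs n a = (\<Sum>i<n. a i)"

definition vmax :: "nat \<Rightarrow> (nat \<Rightarrow> nat) \<Rightarrow> nat" where
  "vmax n a = Max (a ` {..<n})"

definition T :: "nat \<Rightarrow> nat \<Rightarrow> (nat \<Rightarrow> nat) set" where
  "T n d = {a \<in> natvecs n. vabs n a = d}"

inductive_set sgen :: "(nat \<Rightarrow> nat) set \<Rightarrow> (nat \<Rightarrow> nat) set" for S where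
  base: "a \<in> S \<Longrightarrow> a \<in> sgen S"
| add: "a \<in> sgen S \<Longrightarrow> b \<in> sgen S \<Longrightarrow> (\<lambda>i. a i + b i) \<in> sgen S"

definition A :: "nat \<Rightarrow> nat \<Rightarrow> (nat \<Rightarrow> nat) set" where
  "A n d = sgen (T n d)"

definition Am :: "nat \<Rightarrow> nat \<Rightarrow> (nat \<Rightarrow> nat) \<Rightarrow> (nat \<Rightarrow> nat) set" where
  "Am n d m = sgen (T n d - {m})"

definition vec2 :: "nat \<Rightarrow> nat \<Rightarrow> nat \<Rightarrow> nat" where
  "vec2 x y = (\<lambda>i. if i = 0 then x else if i = 1 then y else 0)"

end

theory Submission
  imports Defs "HOL-Library.Function_Algebras"
begin

text \<open>
  Let \<open>E = exceptional d\<close> be the right-hand side. Every element of \<open>E\<close> is \<open>m\<close> plus an element of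
  \<open>\<A>\<^sub>m\<close> (or \<open>m\<close> itself), and \<open>m + p \<in> \<A>\<^sub>m\<close> for every generator
  \<open>p \<noteq> m\<close> except \<open>(d,0)\<close> and, when \<open>d = 2\<close>, \<open>(0,2)\<close>: moving one unit between \<open>m\<close> and \<open>p\<close>
  rewrites the sum as a sum of two generators different from \<open>m\<close>. Adding either of these two
  generators to an element of \<open>E\<close> stays in \<open>E\<close>, and \<open>m + m = (d-2,2) + (d,0)\<close>; hence
  \<open>\<A>\<^sub>m \<union> E\<close> is closed under addition and contains \<open>\<A>\<close>. Conversely, \<open>E\<close> is disjoint
  from \<open>\<A>\<^sub>m\<close> because "the coordinate sum is divisible by \<open>d\<close> and the vector is not in
  \<open>E\<close>" holds for all generators other than \<open>m\<close> and is preserved by addition.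
\<close>

lemma sgen_add: "a \<in> sgen S \<Longrightarrow> b \<in> sgen S \<Longrightarrow> a + b \<in> sgen S"
  using sgen.add[of a S b] by (simp add: plus_fun_def)

lemma sgen_mono: "S \<subseteq> S' \<Longrightarrow> sgen S \<subseteq> sgen S'"
proof
  fix x assume "x \<in> sgen S" and "S \<subseteq> S'"
  then show "x \<in> sgen S'"
    by (induction x rule: sgen.induct) (auto intro: sgen.intros)
qed

lemma sgen_induct_add [consumes 1, case_names generator add]:
  assumes "x \<in> sgen S"
    and "\<And>s. s \<in> S \<Longrightarrow> P s"
    and "\<And>a b. a \<in> sgen S \<Longrightarrow> b \<in> sgen S \<Longrightarrow> P a \<Longrightarrow> P b \<Longrightarrow> P (a + b)"
  shows "P x"
  using assms(1)
proof (induction x rule: sgen.induct)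
  case (add a b)
  then show ?case using assms(3)[of a b] by (simp add: plus_fun_def)
qed (rule assms(2))

lemma sgen_Un_subset:
  assumes "G \<subseteq> E"
    and E_plus_S: "\<And>e s. e \<in> E \<Longrightarrow> s \<in> S \<Longrightarrow> e + s \<in> sgen S \<union> E"
    and E_plus_E: "\<And>e e'. e \<in> E \<Longrightarrow> e' \<in> E \<Longrightarrow> e + e' \<in> sgen S \<union> E"
  shows "sgen (S \<union> G) \<subseteq> sgen S \<union> E"
proof -
  have E_plus_sgen: "e + b \<in> sgen S \<union> E" if "b \<in> sgen S" "e \<in> E" for e b
    using that
  proof (induction b arbitrary: e rule: sgen_induct_add)
    case (add b1 b2)
    have assoc: "e + (b1 + b2) = (e + b1) + b2"
      by (rule add.assoc[symmetric])
    from add.IH(1)[OF \<open>e \<in> E\<close>] show ?case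
    proof
      assume "e + b1 \<in> sgen S"
      then show ?thesis unfolding assoc using sgen_add \<open>b2 \<in> sgen S\<close> by blast
    next
      assume "e + b1 \<in> E"
      then show ?thesis unfolding assoc using add.IH(2) by blast
    qed
  qed (use E_plus_S in blast)
  have closed: "u + v \<in> sgen S \<union> E" if "u \<in> sgen S \<union> E" "v \<in> sgen S \<union> E" for u v
    using that E_plus_sgen[of u v] E_plus_sgen[of v u] E_plus_E[of u v] sgen_add[of u S v]
    by (auto simp: add.commute)
  show ?thesis
  proof
    fix x assume "x \<in> sgen (S \<union> G)"
    then show "x \<in> sgen S \<union> E"
      by (induction x rule: sgen_induct_add) (use \<open>G \<subseteq> E\<close> closed sgen.base in blast)+
  qed
qed

lemma vec2_add: "vec2 x y + vec2 x' y' = vec2 (x + x') (y + y')"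
  by (auto simp: vec2_def fun_eq_iff)

lemma vec2_eq_iff: "vec2 x y = vec2 x' y' \<longleftrightarrow> x = x' \<and> y = y'"
  by (auto simp: vec2_def fun_eq_iff dest: spec[of _ 0] spec[of _ 1])

lemma vec2_apply_0 [simp]: "vec2 x y 0 = x"
  and vec2_apply_1 [simp]: "vec2 x y (Suc 0) = y"
  by (simp_all add: vec2_def)

lemma eq_vec2_iff: "a = vec2 (a 0) (a 1) \<longleftrightarrow> (\<forall>i\<ge>2. a i = 0)"
  by (auto simp: vec2_def fun_eq_iff)

lemma add_eq_vec2D:
  assumes "a + b = vec2 x y"
  shows "a = vec2 (a 0) (a 1)"
  unfolding eq_vec2_iff
proof (intro allI impI)
  fix i :: nat assume "i \<ge> 2"
  then show "a i = 0" using fun_cong[OF assms, of i] by (simp add: vec2_def)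
qed

lemma vabs_add: "vabs n (a + b) = vabs n a + vabs n b"
  by (simp add: vabs_def sum.distrib)

lemma vabs_vec2: "n \<ge> 2 \<Longrightarrow> vabs n (vec2 x y) = x + y"
proof -
  assume "n \<ge> 2"
  then have "{..<n} = {0, 1} \<union> {2..<n}" by auto
  then show ?thesis by (simp add: vabs_def vec2_def)
qed

lemma vec2_mem_T:
  assumes "n \<ge> 2"
  shows "vec2 x y \<in> T n d \<longleftrightarrow> x + y = d"
proof -
  have "vec2 x y \<in> natvecs n" using assms by (simp add: natvecs_def vec2_def)
  then show ?thesis using assms by (auto simp: T_def vabs_vec2)
qed

definition exceptional :: "nat \<Rightarrow> (nat \<Rightarrow> nat) set" where
  "exceptional d = (if d = 2 then {vec2 (2 * s + 1) (2 * t + 1) | s t. True}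
     else {vec2 (d * s - 1) 1 | s. s \<ge> 1})"

lemma ex_mult_minus_one_iff: "(\<exists>s\<ge>1. a = d * s - 1) \<longleftrightarrow> a mod d = d - 1"
  for a d :: nat
proof (cases "d = 0")
  case False
  show ?thesis
  proof
    assume "\<exists>s\<ge>1. a = d * s - 1"
    then obtain s where "s \<ge> 1" "a = d * s - 1" by blast
    then have "a = d - 1 + d * (s - 1)" using False by (cases s) auto
    then have "a mod d = (d - 1 + d * (s - 1)) mod d" by simp
    also have "\<dots> = (d - 1) mod d" by (rule mod_mult_self2)
    also have "\<dots> = d - 1" using False by simp
    finally show "a mod d = d - 1" .
  next
    assume "a mod d = d - 1"
    then obtain q where "a = d * q + (d - 1)" by (metis div_mult_mod_eq mult.commute)
    then have "a = d * (q + 1) - 1" using False by simp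
    then show "\<exists>s\<ge>1. a = d * s - 1" by (metis le_add2)
  qed
qed (auto intro: exI[of _ 1])

lemma vec2_mem_exceptional_iff:
  "vec2 a b \<in> exceptional d \<longleftrightarrow>
     (if d = 2 then odd a \<and> odd b else b = 1 \<and> a mod d = d - 1)"
proof (cases "d = 2")
  case True
  have "odd k \<longleftrightarrow> (\<exists>s. k = 2 * s + 1)" for k :: nat
    by (metis oddE even_mult_iff even_plus_one_iff even_two_times_div_two dvd_triv_left)
  then show ?thesis using True by (auto simp: exceptional_def vec2_eq_iff)
next
  case False
  then show ?thesis
    using ex_mult_minus_one_iff[of a d] by (auto simp: exceptional_def vec2_eq_iff)
qed

lemma exceptional_eq_vec2: "x \<in> exceptional d \<Longrightarrow> x = vec2 (x 0) (x 1)"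
  unfolding exceptional_def by (cases "d = 2") auto

lemma exceptional_add_cases:
  assumes "d dvd a0 + a1" and "d dvd b0 + b1"
    and "vec2 (a0 + b0) (a1 + b1) \<in> exceptional d"
  shows "vec2 a0 a1 \<in> exceptional d \<or> vec2 b0 b1 \<in> exceptional d"
proof (cases "d = 2")
  case True
  then show ?thesis using assms by (simp add: vec2_mem_exceptional_iff)
next
  case False
  then have sum1: "a1 + b1 = 1" and sum0: "(a0 + b0) mod d = d - 1"
    using assms(3) by (simp_all add: vec2_mem_exceptional_iff)
  from sum1 consider "a1 = 1" "b1 = 0" | "a1 = 0" "b1 = 1" by linarith
  then show ?thesis
  proof cases
    case 1
    then have "(a0 + b0) mod d = a0 mod d" using assms(2) by (simp add: mod_add_right_eq[symmetric])
    then show ?thesis using 1 sum0 False by (simp add: vec2_mem_exceptional_iff)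
  next
    case 2
    then have "(a0 + b0) mod d = b0 mod d" using assms(1) by (simp add: mod_add_left_eq[symmetric])
    then show ?thesis using 2 sum0 False by (simp add: vec2_mem_exceptional_iff)
  qed
qed

lemma exceptional_of_sum_eq:
  "vec2 x y \<in> exceptional d \<Longrightarrow> x + y = d \<Longrightarrow> x = d - 1 \<and> y = 1"
  by (cases "d = 2") (auto simp: vec2_mem_exceptional_iff, presburger+)

lemma T_nonzero_coordinate:
  assumes "p \<in> T n d" and "d \<noteq> 0"
  shows "\<exists>j<n. p j \<ge> 1"
proof -
  have "sum p {..<n} \<noteq> 0" using assms by (simp add: T_def vabs_def)
  then obtain j where "j < n" "p j \<noteq> 0" by (auto simp: sum_eq_0_iff)
  then show ?thesis by auto
qed

definition move_unit :: "(nat \<Rightarrow> nat) \<Rightarrow> nat \<Rightarrow> nat \<Rightarrow> nat \<Rightarrow> nat" where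
  "move_unit p j k = p(j := p j - 1, k := p k + 1)"

lemma sum_move_unit:
  assumes "finite I" "j \<in> I" "k \<in> I" "j \<noteq> k" "p j \<ge> 1"
  shows "sum (move_unit p j k) I = sum p I"
proof -
  let ?J = "I - {j} - {k}"
  have "sum f I = f j + f k + sum f ?J" for f :: "nat \<Rightarrow> nat"
    using assms by (simp add: sum.remove[of I j] sum.remove[of "I - {j}" k])
  moreover have "sum (move_unit p j k) ?J = sum p ?J"
    by (rule sum.cong) (auto simp: move_unit_def)
  ultimately show ?thesis using assms by (simp add: move_unit_def)
qed

lemma move_unit_mem_T:
  assumes "p \<in> T n d" "j < n" "k < n" "j \<noteq> k" "p j \<ge> 1"
  shows "move_unit p j k \<in> T n d"
  using assms sum_move_unit[of "{..<n}" j k p]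
  by (auto simp: T_def natvecs_def vabs_def move_unit_def)

lemma move_unit_move_unit: "j \<noteq> k \<Longrightarrow> p j \<ge> 1 \<Longrightarrow> move_unit (move_unit p j k) k j = p"
  by (auto simp: move_unit_def fun_eq_iff)

lemma add_eq_move_unit_add:
  "j \<noteq> k \<Longrightarrow> p j \<ge> 1 \<Longrightarrow> q k \<ge> 1 \<Longrightarrow> p + q = move_unit p j k + move_unit q k j"
  by (auto simp: move_unit_def fun_eq_iff)

context
  fixes n d :: nat and m :: "nat \<Rightarrow> nat"
  assumes n_ge_2: "n \<ge> 2" and d_ge_2: "d \<ge> 2" and m_eq: "m = vec2 (d - 1) 1"
begin

lemma m_mem_T: "m \<in> T n d"
  using n_ge_2 d_ge_2 by (simp add: m_eq vec2_mem_T)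

lemma m_mem_exceptional: "m \<in> exceptional d"
  using d_ge_2 by (simp add: m_eq vec2_mem_exceptional_iff)

lemma generator_mem_Am: "p \<in> T n d \<Longrightarrow> p \<noteq> m \<Longrightarrow> p \<in> Am n d m"
  by (simp add: Am_def sgen.base)

lemma vec2_mem_Am: "x + y = d \<Longrightarrow> x \<noteq> d - 1 \<Longrightarrow> vec2 x y \<in> Am n d m"
  using n_ge_2 by (intro generator_mem_Am) (auto simp: vec2_mem_T m_eq vec2_eq_iff)

lemma Am_add: "a \<in> Am n d m \<Longrightarrow> b \<in> Am n d m \<Longrightarrow> a + b \<in> Am n d m"
  by (simp add: Am_def sgen_add)

lemma Am_subset_A: "Am n d m \<subseteq> A n d"
  unfolding Am_def A_def by (rule sgen_mono) blast

lemma vec2_scale_mem_Am: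
  assumes "vec2 x y \<in> Am n d m" and "k \<ge> 1"
  shows "vec2 (k * x) (k * y) \<in> Am n d m"
  using assms(2)
proof (induction k rule: dec_induct)
  case (step k)
  have "vec2 (Suc k * x) (Suc k * y) = vec2 (k * x) (k * y) + vec2 x y"
    by (simp add: vec2_add add.commute)
  then show ?case using Am_add[OF step.IH assms(1)] by metis
qed (use assms(1) in simp)

lemma vec2_multiple_mem_Am:
  assumes "a + b \<ge> 1"
  shows "vec2 (d * a) (d * b) \<in> Am n d m"
proof -
  have row: "vec2 (a * d) 0 \<in> Am n d m" if "a \<ge> 1" for a
    using vec2_scale_mem_Am[OF vec2_mem_Am[of d 0] that] d_ge_2 by simp
  have column: "vec2 0 (b * d) \<in> Am n d m" if "b \<ge> 1" for b
    using vec2_scale_mem_Am[OF vec2_mem_Am[of 0 d] that] d_ge_2 by simp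
  consider "b = 0" | "a = 0" | "a \<ge> 1" "b \<ge> 1" by linarith
  then show ?thesis
  proof cases
    case 3
    have "vec2 (d * a) (d * b) = vec2 (a * d) 0 + vec2 0 (b * d)"
      by (simp add: vec2_add mult.commute)
    then show ?thesis using Am_add row column 3 by simp
  qed (use assms row column in \<open>simp_all add: mult.commute\<close>)
qed

lemma exceptional_cases:
  assumes "e \<in> exceptional d"
  shows "e = m \<or> (\<exists>r \<in> Am n d m. e = m + r)"
proof -
  obtain a b where e: "e = m + vec2 (d * a) (d * b)"
  proof (cases "d = 2")
    case True
    with assms obtain s t where "e = vec2 (2 * s + 1) (2 * t + 1)"
      by (auto simp: exceptional_def)
    then show thesis using that[of s t] True by (simp add: m_eq vec2_add)
  next
    case False
    with assms obtain s where "s \<ge> 1" "e = vec2 (d * s - 1) 1"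
      by (auto simp: exceptional_def)
    moreover from \<open>s \<ge> 1\<close> have "d * s - 1 = d - 1 + d * (s - 1)"
      using d_ge_2 by (cases s) auto
    ultimately show thesis using that[of "s - 1" 0] by (simp add: m_eq vec2_add)
  qed
  show ?thesis
  proof (cases "a + b = 0")
    case True
    then have "e = m" using e by (simp add: vec2_def fun_eq_iff)
    then show ?thesis ..
  next
    case False
    then show ?thesis using e vec2_multiple_mem_Am[of a b] by auto
  qed
qed

lemma exceptional_subset_A: "exceptional d \<subseteq> A n d"
proof
  fix e assume "e \<in> exceptional d"
  moreover have "m \<in> A n d" using m_mem_T by (simp add: A_def sgen.base)
  ultimately show "e \<in> A n d"
    using exceptional_cases Am_subset_A sgen_add by (fastforce simp: A_def)
qed

lemma exceptional_plus_mem_Am: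
  assumes "m + x \<in> Am n d m" and "e \<in> exceptional d"
  shows "e + x \<in> Am n d m"
  using exceptional_cases[OF assms(2)]
proof
  assume "\<exists>r \<in> Am n d m. e = m + r"
  then obtain r where "r \<in> Am n d m" "e + x = r + (m + x)" by (auto simp: ac_simps)
  then show ?thesis using Am_add assms(1) by simp
qed (use assms(1) in simp)

lemma m_plus_m_mem_Am: "m + m \<in> Am n d m"
proof -
  have "m + m = vec2 (d - 2) 2 + vec2 d 0"
    using d_ge_2 by (simp add: m_eq vec2_add vec2_eq_iff)
  then show ?thesis using Am_add vec2_mem_Am d_ge_2 by simp
qed

lemma exceptional_plus_exceptional:
  assumes "e \<in> exceptional d" and "e' \<in> exceptional d"
  shows "e + e' \<in> Am n d m"
proof -
  have "m + e' \<in> Am n d m"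
    using exceptional_plus_mem_Am[OF m_plus_m_mem_Am assms(2)] by (simp add: add.commute)
  then show ?thesis using exceptional_plus_mem_Am assms(1) by blast
qed

lemma add_mem_Am_by_move_unit:
  assumes "p \<in> T n d" "q \<in> T n d" "j < n" "k < n" "j \<noteq> k" "p j \<ge> 1" "q k \<ge> 1"
    and "move_unit p j k \<noteq> m" "move_unit q k j \<noteq> m"
  shows "p + q \<in> Am n d m"
  using assms add_eq_move_unit_add[of j k p q]
  by (simp add: Am_add generator_mem_Am move_unit_mem_T)

lemma m_plus_generator_mem_Am:
  assumes p: "p \<in> T n d" "p \<noteq> m" "p \<noteq> vec2 d 0" "\<not> (d = 2 \<and> p = vec2 0 2)"
  shows "m + p \<in> Am n d m"
proof -
  have m0: "m 0 = d - 1" and m1: "m 1 = 1" and "move_unit m 1 0 = vec2 d 0"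
    and "move_unit m 0 1 = vec2 (d - 2) 2"
    using d_ge_2 by (auto simp: m_eq move_unit_def vec2_def fun_eq_iff)
  have moved_back: "p = move_unit m k j" if "move_unit p j k = m" "j \<noteq> k" "p j \<ge> 1" for j k
    using move_unit_move_unit[of j k p] that by simp
  consider "p 0 \<ge> 1" | "p 0 = 0" "p 1 \<ge> 1" | "p 0 = 0" "p 1 = 0" by linarith
  then show ?thesis
  proof cases
    case 1
    then have "p + m \<in> Am n d m"
      using n_ge_2 p m1 m_mem_T moved_back[of 0 1] d_ge_2 \<open>move_unit m 1 0 = vec2 d 0\<close>
      by (intro add_mem_Am_by_move_unit[of p m 0 1]) (auto simp: m_eq vec2_eq_iff)
    then show ?thesis by (simp add: add.commute)
  next
    case 2
    have "move_unit p 1 0 \<noteq> m"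
    proof
      assume "move_unit p 1 0 = m"
      then have "p = vec2 (d - 2) 2"
        using moved_back[of 1 0] 2 \<open>move_unit m 0 1 = vec2 (d - 2) 2\<close> by simp
      then show False using 2 p(4) d_ge_2 by simp
    qed
    then have "p + m \<in> Am n d m"
      using n_ge_2 p 2 m0 m_mem_T d_ge_2 \<open>move_unit m 0 1 = vec2 (d - 2) 2\<close>
      by (intro add_mem_Am_by_move_unit[of p m 1 0]) (auto simp: m_eq vec2_eq_iff)
    then show ?thesis by (simp add: add.commute)
  next
    case 3
    obtain j where j: "j < n" "p j \<ge> 1"
      using T_nonzero_coordinate[OF p(1)] d_ge_2 by auto
    with 3 have "j \<noteq> 0" "j \<noteq> 1" by (metis not_one_le_zero)+
    then have "j \<ge> 2" by linarith
    have "move_unit p j 1 0 \<noteq> m 0" "move_unit m 1 j 1 \<noteq> m 1"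
      using j \<open>j \<ge> 2\<close> 3 m0 m1 d_ge_2 by (auto simp: move_unit_def)
    then have "p + m \<in> Am n d m"
      using n_ge_2 p j \<open>j \<ge> 2\<close> m1 m_mem_T
      by (intro add_mem_Am_by_move_unit[of p m j 1]) auto
    then show ?thesis by (simp add: add.commute)
  qed
qed

lemma exceptional_plus_boundary_generator:
  assumes "e \<in> exceptional d" and "p = vec2 d 0 \<or> (d = 2 \<and> p = vec2 0 2)"
  shows "e + p \<in> exceptional d"
proof -
  obtain x y where e: "e = vec2 x y" and exc: "vec2 x y \<in> exceptional d"
    using exceptional_eq_vec2[OF assms(1)] assms(1) by metis
  from assms(2) consider "p = vec2 d 0" | "d = 2" "p = vec2 0 2" by blast
  then show ?thesis
  proof cases
    case 1
    then have "e + p = vec2 (x + d) y" by (simp add: e vec2_add)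
    then show ?thesis using exc by (simp add: vec2_mem_exceptional_iff)
  next
    case 2
    then have "e + p = vec2 x (y + 2)" by (simp add: e vec2_add)
    then show ?thesis using exc 2 by (simp add: vec2_mem_exceptional_iff)
  qed
qed

lemma exceptional_plus_generator:
  assumes "e \<in> exceptional d" and "p \<in> T n d - {m}"
  shows "e + p \<in> Am n d m \<union> exceptional d"
proof (cases "p = vec2 d 0 \<or> (d = 2 \<and> p = vec2 0 2)")
  case True
  then show ?thesis using exceptional_plus_boundary_generator assms(1) by blast
next
  case False
  then show ?thesis
    using exceptional_plus_mem_Am[OF m_plus_generator_mem_Am assms(1)] assms(2) by blast
qed

lemma A_subset_Am_Un_exceptional: "A n d \<subseteq> Am n d m \<union> exceptional d"
proof -
  have "T n d = (T n d - {m}) \<union> {m}" using m_mem_T by blast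
  then show ?thesis
    unfolding A_def Am_def
    using sgen_Un_subset[of "{m}" "exceptional d" "T n d - {m}"] m_mem_exceptional
      exceptional_plus_generator exceptional_plus_exceptional
    by (simp add: Am_def)
qed

lemma Am_invariant: "x \<in> Am n d m \<Longrightarrow> d dvd vabs n x \<and> x \<notin> exceptional d"
  unfolding Am_def
proof (induction x rule: sgen_induct_add)
  case (generator p)
  then have "vabs n p = d" "p \<noteq> m" by (auto simp: T_def)
  moreover have "p \<notin> exceptional d"
  proof
    assume "p \<in> exceptional d"
    then obtain x y where p: "p = vec2 x y" and exc: "vec2 x y \<in> exceptional d"
      using exceptional_eq_vec2 by metis
    have "x + y = d"
      using \<open>vabs n p = d\<close> vabs_vec2[OF n_ge_2] by (simp add: p)
    then have "p = m" using exceptional_of_sum_eq[OF exc] by (simp add: p m_eq)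
    with \<open>p \<noteq> m\<close> show False ..
  qed
  ultimately show ?case by simp
next
  case (add a b)
  have "a + b \<notin> exceptional d"
  proof
    assume "a + b \<in> exceptional d"
    then have ab: "a + b = vec2 (a 0 + b 0) (a 1 + b 1)"
      using exceptional_eq_vec2 by fastforce
    then have a: "a = vec2 (a 0) (a 1)" and b: "b = vec2 (b 0) (b 1)"
      using add_eq_vec2D[of a b] add_eq_vec2D[of b a] by (auto simp: add.commute)
    have "d dvd a 0 + a 1" "d dvd b 0 + b 1"
      using add.IH vabs_vec2[OF n_ge_2] a b by metis+
    then show False
      using exceptional_add_cases[of d "a 0" "a 1" "b 0" "b 1"] \<open>a + b \<in> exceptional d\<close> ab a b
        add.IH by metis
  qed
  then show ?case using add.IH by (metis vabs_add dvd_add)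
qed

lemma A_diff_Am_eq_exceptional: "A n d - Am n d m = exceptional d"
  using A_subset_Am_Un_exceptional exceptional_subset_A Am_invariant by blast

end

theorem lemma2p18:
  fixes n d :: nat and m :: "nat \<Rightarrow> nat"
  assumes "n \<ge> 2" and "d \<ge> 2" and "m = vec2 (d - 1) 1"
  shows "A n d - Am n d m =
    (if d = 2 then {vec2 (2 * s + 1) (2 * t + 1) | s t. True}
     else {vec2 (d * s - 1) 1 | s. s \<ge> 1})"
  using A_diff_Am_eq_exceptional[OF assms] by (simp add: exceptional_def)

end
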